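(* Suppose $D$ is a balanced effective divisor class on $X$ with $\chi(D)\ge1$, and $A_t$ is an ample divisor with $2A_t\cdot D\le A_t\cdot K$. Suppose $D$ is $\ell$ steps away from having equal multiplicities. Then $$\ell<\frac12\left(n-\sqrt{(8\chi(D)+1)n}\right).$$ In particular, if $10\le n\le 12$, then $\chi(D)=1$, $\ell=0$, and $D$ has equal multiplicities.
   Context: Let $X$ be the blowup of $\mathbb{P}^2_{\mathbb{C}}$ at $n$ very general points, with $H$ the pullback of a line class, $E_i$ the exceptional divisors, $E=\sum_iE_i$, and $K=K_X=-3H+E$. For real $t$, $A_t=tH-E$. Write $\chi(D)=\chi(\mathcal{O}_X(D))$; effective means the class of an effective divisor (zero allowed). A divisor $D=dH-\sum_im_iE_i$ is balanced if $|m_i-m_j|\le1$ for all $i,j$. For a balanced $D$, there are $k$ indices with multiplicity $m+1$ and $n-k$ indices with multiplicity $m$ for some $m$ and $0\le k\le n$; setting $\ell=\min\{k,n-k\}$, $D$ is said to be $\ell$ steps away from having equal multiplicities. *)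

theory Defs
  imports Complex_Main
begin

text \<open>
  Setting: X is the blowup of the complex projective plane at n very general points.
  A divisor class D = d H - sum_i m_i E_i is encoded by an integer d and a
  multiplicity function m :: nat => int, of which only the values m i for i < n matter.
\<close>

type_synonym cpoint = "complex \<times> complex \<times> complex"

text \<open>Homogeneous polynomials of degree d in C[x,y,z], given by their coefficients on
  exponent triples (a,b,c) with a + b + c = d (other coefficients are ignored).\<close>

definition monomials :: "nat \<Rightarrow> (nat \<times> nat \<times> nat) set" where
  "monomials d = {(a, b, c). a + b + c = d}"

definition hpoly_nonzero :: "nat \<Rightarrow> (nat \<times> nat \<times> nat \<Rightarrow> complex) \<Rightarrow> bool" where
  "hpoly_nonzero d f \<longleftrightarrow> (\<exists>e\<in>monomials d. f e \<noteq> 0)"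

definition ffact_nat :: "nat \<Rightarrow> nat \<Rightarrow> nat" where
  "ffact_nat k j = (if j \<le> k then fact k div fact (k - j) else 0)"

definition hpoly_deriv_at ::
  "nat \<Rightarrow> (nat \<times> nat \<times> nat \<Rightarrow> complex) \<Rightarrow> nat \<times> nat \<times> nat \<Rightarrow> cpoint \<Rightarrow> complex" where
  "hpoly_deriv_at d f = (\<lambda>(i, j, k) (x, y, z).
     (\<Sum>(a, b, c)\<in>monomials d.
        f (a, b, c) * of_nat (ffact_nat a i * ffact_nat b j * ffact_nat c k)
        * x ^ (a - i) * y ^ (b - j) * z ^ (c - k)))"

definition mult_ge :: "nat \<Rightarrow> (nat \<times> nat \<times> nat \<Rightarrow> complex) \<Rightarrow> cpoint \<Rightarrow> nat \<Rightarrow> bool" where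
  "mult_ge d f p r \<longleftrightarrow>
     (\<forall>i j k. i + j + k < r \<longrightarrow> hpoly_deriv_at d f (i, j, k) p = 0)"

definition distinct_proj_points :: "nat \<Rightarrow> (nat \<Rightarrow> cpoint) \<Rightarrow> bool" where
  "distinct_proj_points n p \<longleftrightarrow>
     (\<forall>i<n. p i \<noteq> (0, 0, 0)) \<and>
     (\<forall>i<n. \<forall>j<n. i \<noteq> j \<longrightarrow>
        \<not> (\<exists>c::complex. (case p i of (x, y, z) \<Rightarrow> (c * x, c * y, c * z)) = p j))"

text \<open>Since h^0 is upper semicontinuous on the (irreducible) configuration space of n
  distinct points, its value at very general points is its minimum; hence the class is
  effective at very general points iff for every configuration of n distinct points
  there is a nonzero plane curve of degree d with multiplicity at least max(m_i,0) at
  the i-th point (exceptional curves with negative coefficient are fixed components).\<close>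
definition effective :: "nat \<Rightarrow> int \<Rightarrow> (nat \<Rightarrow> int) \<Rightarrow> bool" where
  "effective n d m \<longleftrightarrow> 0 \<le> d \<and>
     (\<forall>p. distinct_proj_points n p \<longrightarrow>
        (\<exists>f. hpoly_nonzero (nat d) f \<and>
             (\<forall>i<n. mult_ge (nat d) f (p i) (nat (max (m i) 0)))))"

text \<open>Intersection product on Pic X: H^2 = 1, E_i^2 = -1, H.E_i = 0, E_i.E_j = 0.\<close>
definition intersect :: "nat \<Rightarrow> real \<times> (nat \<Rightarrow> real) \<Rightarrow> real \<times> (nat \<Rightarrow> real) \<Rightarrow> real" where
  "intersect n D D' = fst D * fst D' - (\<Sum>i<n. snd D i * snd D' i)"

definition int_class :: "int \<Rightarrow> (nat \<Rightarrow> int) \<Rightarrow> real \<times> (nat \<Rightarrow> real)" where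
  "int_class d m = (of_int d, \<lambda>i. of_int (m i))"

text \<open>A_t = t H - E and K = -3H + E.\<close>
definition A_cls :: "real \<Rightarrow> real \<times> (nat \<Rightarrow> real)" where
  "A_cls t = (t, \<lambda>_. 1)"

definition K_cls :: "real \<times> (nat \<Rightarrow> real)" where
  "K_cls = (-3, \<lambda>_. -1)"

text \<open>chi(O_X(D)) via Riemann--Roch on the rational surface X (chi(O_X) = 1):
  chi(D) = 1 + (D.D - D.K)/2.\<close>
definition chi :: "nat \<Rightarrow> int \<Rightarrow> (nat \<Rightarrow> int) \<Rightarrow> real" where
  "chi n d m = 1 + (intersect n (int_class d m) (int_class d m)
                    - intersect n (int_class d m) K_cls) / 2"

text \<open>Ampleness of the real divisor A_t on X, via the Nakai--Moishezon criterion
  (valid for R-divisors by Campana--Peternell): A_t^2 > 0 and A_t.C > 0 for every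
  nonzero effective class C (equivalently, every irreducible curve).\<close>
definition ample_A :: "nat \<Rightarrow> real \<Rightarrow> bool" where
  "ample_A n t \<longleftrightarrow> intersect n (A_cls t) (A_cls t) > 0 \<and>
     (\<forall>d m. effective n d m \<and> (d \<noteq> 0 \<or> (\<exists>i<n. m i \<noteq> 0)) \<longrightarrow>
        intersect n (A_cls t) (int_class d m) > 0)"

definition balanced :: "nat \<Rightarrow> (nat \<Rightarrow> int) \<Rightarrow> bool" where
  "balanced n m \<longleftrightarrow> (\<forall>i<n. \<forall>j<n. \<bar>m i - m j\<bar> \<le> 1)"

definition steps_away :: "nat \<Rightarrow> (nat \<Rightarrow> int) \<Rightarrow> nat \<Rightarrow> bool" where
  "steps_away n m l \<longleftrightarrow> (\<exists>m0 k. k \<le> n \<and>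
     card {i. i < n \<and> m i = m0 + 1} = k \<and> card {i. i < n \<and> m i = m0} = n - k \<and>
     l = min k (n - k))"

end

theory Submission
  imports Defs
begin

text \<open>
  Write s and q for the sums of the multiplicities and of their squares.  Ampleness gives
  t > sqrt n, so the hypothesis 2 A_t.D <= A_t.K, i.e. (2d + 3) t <= n + 2s, yields
  (2d + 3)^2 n < (n + 2s)^2.  Since 8 chi(D) + 1 = (2d + 3)^2 - 4(q + s), this becomes
  (8 chi(D) + 1) n < n^2 - 4(nq - s^2).  For a balanced class that is l steps away from
  equal multiplicities, nq - s^2 = l(n - l), so the right-hand side is (n - 2l)^2.
  For 10 <= n <= 12 the integrality of chi(D) leaves only chi(D) = 1 and l = 0.
  Being l steps away already forces the multiplicities to take two adjacent values.
\<close>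

lemma intersect_A_cls_int_class:
  "intersect n (A_cls t) (int_class d m) = t * of_int d - (\<Sum>i<n. of_int (m i))"
  by (simp add: intersect_def A_cls_def int_class_def)

lemma intersect_A_cls_K_cls: "intersect n (A_cls t) K_cls = real n - 3 * t"
  by (simp add: intersect_def A_cls_def K_cls_def sum_negf)

lemma intersect_A_cls_self: "intersect n (A_cls t) (A_cls t) = t\<^sup>2 - real n"
  by (simp add: intersect_def A_cls_def power2_eq_square)

lemma chi_eq:
  "chi n d m = 1 + of_int (d\<^sup>2 + 3 * d - (\<Sum>i<n. (m i)\<^sup>2 + m i)) / 2"
  by (simp add: chi_def intersect_def int_class_def K_cls_def sum_negf sum.distrib
      power2_eq_square field_simps)

lemma chi_Ints: "chi n d m \<in> \<int>"
proof -
  have "even (d\<^sup>2 + 3 * d - (\<Sum>i<n. (m i)\<^sup>2 + m i))"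
    by (auto intro: dvd_sum simp: power2_eq_square)
  then obtain w where "d\<^sup>2 + 3 * d - (\<Sum>i<n. (m i)\<^sup>2 + m i) = 2 * w" ..
  then have "chi n d m = of_int (1 + w)"
    by (simp add: chi_eq)
  then show ?thesis by simp
qed

lemma effective_line_class: "effective n 1 (\<lambda>_. 0)"
  unfolding effective_def
proof (intro conjI allI impI)
  fix p :: "nat \<Rightarrow> cpoint"
  have "(1, 0, 0) \<in> monomials 1"
    by (simp add: monomials_def)
  then have "hpoly_nonzero 1 (\<lambda>_. 1)"
    unfolding hpoly_nonzero_def by auto
  then show "\<exists>f. hpoly_nonzero (nat 1) f \<and>
      (\<forall>i<n. mult_ge (nat 1) f (p i) (nat (max ((\<lambda>_. 0::int) i) 0)))"
    by (auto simp: mult_ge_def)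
qed simp

lemma ample_A_imp_sqrt_less:
  assumes "ample_A n t"
  shows "sqrt (real n) < t"
proof -
  have "intersect n (A_cls t) (int_class 1 (\<lambda>_. 0)) > 0"
    using assms effective_line_class unfolding ample_A_def by auto
  then have "t > 0"
    by (simp add: intersect_A_cls_int_class)
  moreover have "real n < t\<^sup>2"
    using assms by (simp add: ample_A_def intersect_A_cls_self)
  ultimately show ?thesis
    by (metis abs_of_pos real_sqrt_abs real_sqrt_less_mono)
qed

lemma chi_bound_variance:
  fixes n :: nat and m :: "nat \<Rightarrow> int" and s q :: real
  defines "s \<equiv> (\<Sum>i<n. of_int (m i))" and "q \<equiv> (\<Sum>i<n. (of_int (m i))\<^sup>2)"
  assumes "ample_A n t" and "0 \<le> d"
    and "2 * intersect n (A_cls t) (int_class d m) \<le> intersect n (A_cls t) K_cls"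
  shows "(8 * chi n d m + 1) * real n < (real n)\<^sup>2 - 4 * (real n * q - s\<^sup>2)"
proof -
  have "(2 * of_int d + 3) * sqrt (real n) < (2 * of_int d + 3) * t"
    using ample_A_imp_sqrt_less[OF assms(3)] assms(4) by (intro mult_strict_left_mono) auto
  also have "\<dots> \<le> real n + 2 * s"
    using assms(5) by (simp add: intersect_A_cls_int_class intersect_A_cls_K_cls s_def
        algebra_simps)
  finally have "((2 * of_int d + 3) * sqrt (real n))\<^sup>2 < (real n + 2 * s)\<^sup>2"
    using assms(4) by (intro power_strict_mono) auto
  then have square_bound: "(2 * of_int d + 3)\<^sup>2 * real n < (real n + 2 * s)\<^sup>2"
    by (simp add: power_mult_distrib)
  have chi_id: "8 * chi n d m + 1 = (2 * of_int d + 3)\<^sup>2 - 4 * (q + s)"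
    by (simp add: chi_eq s_def q_def sum.distrib power2_eq_square field_simps)
  have "(8 * chi n d m + 1) * real n = (2 * of_int d + 3)\<^sup>2 * real n - 4 * (q + s) * real n"
    by (simp only: chi_id left_diff_distrib)
  also have "\<dots> < (real n + 2 * s)\<^sup>2 - 4 * (q + s) * real n"
    using square_bound by linarith
  also have "\<dots> = (real n)\<^sup>2 - 4 * (real n * q - s\<^sup>2)"
    by (simp add: power2_eq_square algebra_simps)
  finally show ?thesis .
qed

lemma steps_away_sum:
  assumes "steps_away n m l"
  obtains m0 k where "k \<le> n" and "l = min k (n - k)"
    and "\<And>g :: int \<Rightarrow> int. (\<Sum>i<n. g (m i)) = int k * g (m0 + 1) + int (n - k) * g m0"
proof -
  obtain m0 k where k: "k \<le> n" "l = min k (n - k)"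
    and card_upper: "card {i. i < n \<and> m i = m0 + 1} = k"
    and card_lower: "card {i. i < n \<and> m i = m0} = n - k"
    using assms unfolding steps_away_def by blast
  define upper where "upper = {i. i < n \<and> m i = m0 + 1}"
  define lower where "lower = {i. i < n \<and> m i = m0}"
  have fin: "finite upper" "finite lower" and disj: "upper \<inter> lower = {}"
    by (auto simp: upper_def lower_def)
  have "card (upper \<union> lower) = card {..<n}"
    using card_Un_disjoint[OF fin disj] card_upper card_lower k(1)
    by (simp add: upper_def lower_def)
  then have cover: "upper \<union> lower = {..<n}"
    by (intro card_subset_eq) (auto simp: upper_def lower_def)
  have "(\<Sum>i<n. g (m i)) = int k * g (m0 + 1) + int (n - k) * g m0" for g :: "int \<Rightarrow> int"
  proof -
    have "(\<Sum>i<n. g (m i)) = (\<Sum>i\<in>upper. g (m i)) + (\<Sum>i\<in>lower. g (m i))"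
      by (metis cover sum.union_disjoint[OF fin disj])
    also have "\<dots> = (\<Sum>i\<in>upper. g (m0 + 1)) + (\<Sum>i\<in>lower. g m0)"
      by (intro arg_cong2[where f = "(+)"] sum.cong) (auto simp: upper_def lower_def)
    finally show ?thesis
      using card_upper card_lower by (simp add: upper_def lower_def)
  qed
  with k that show ?thesis by blast
qed

lemma two_value_variance:
  fixes k j a :: int
  shows "(k + j) * (k * (a + 1)\<^sup>2 + j * a\<^sup>2) - (k * (a + 1) + j * a)\<^sup>2 = k * j"
  by (simp add: power2_eq_square algebra_simps)

lemma steps_away_variance:
  assumes "steps_away n m l"
  shows "int n * (\<Sum>i<n. (m i)\<^sup>2) - (\<Sum>i<n. m i)\<^sup>2 = int l * int (n - l)"
proof -
  obtain m0 k where k: "k \<le> n" "l = min k (n - k)"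
    and sums: "\<And>g :: int \<Rightarrow> int. (\<Sum>i<n. g (m i)) = int k * g (m0 + 1) + int (n - k) * g m0"
    using steps_away_sum[OF assms] by blast
  have "int n = int k + int (n - k)"
    using k(1) by simp
  moreover have "(\<Sum>i<n. (m i)\<^sup>2) = int k * (m0 + 1)\<^sup>2 + int (n - k) * m0\<^sup>2"
    using sums[of "\<lambda>x. x\<^sup>2"] by simp
  moreover have "(\<Sum>i<n. m i) = int k * (m0 + 1) + int (n - k) * m0"
    using sums[of "\<lambda>x. x"] by simp
  ultimately have "int n * (\<Sum>i<n. (m i)\<^sup>2) - (\<Sum>i<n. m i)\<^sup>2 = int k * int (n - k)"
    by (simp only: two_value_variance)
  also have "\<dots> = int l * int (n - l)"
    using k by (auto simp: min_def)
  finally show ?thesis .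
qed

lemma steps_away_le_half: "steps_away n m l \<Longrightarrow> 2 * l \<le> n"
  by (auto simp: steps_away_def)

lemma steps_away_0_imp_equal:
  assumes "steps_away n m 0"
  shows "\<forall>i<n. \<forall>j<n. m i = m j"
proof -
  obtain m0 k where k: "k \<le> n" "0 = min k (n - k)"
    and card_upper: "card {i. i < n \<and> m i = m0 + 1} = k"
    and card_lower: "card {i. i < n \<and> m i = m0} = n - k"
    using assms unfolding steps_away_def by blast
  from k have "k = 0 \<or> k = n"
    by (auto simp: min_def split: if_splits)
  then obtain c where c: "card {i. i < n \<and> m i = c} = card {..<n}"
    using card_upper card_lower by (metis card_lessThan diff_zero diff_self_eq_0)
  have "{i. i < n \<and> m i = c} = {..<n}"
    by (rule card_subset_eq[OF finite_lessThan _ c]) blast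
  then have "\<forall>i<n. m i = c"
    by (auto simp: set_eq_iff)
  then show ?thesis
    by simp
qed

lemma steps_away_chi_bound:
  assumes "steps_away n m l" "ample_A n t" "0 \<le> d"
    and "2 * intersect n (A_cls t) (int_class d m) \<le> intersect n (A_cls t) K_cls"
  shows "(8 * chi n d m + 1) * real n < (real n - 2 * real l)\<^sup>2"
proof -
  have "real n * (\<Sum>i<n. (of_int (m i))\<^sup>2) - (\<Sum>i<n. of_int (m i))\<^sup>2 = real l * real (n - l)"
    using arg_cong[OF steps_away_variance[OF assms(1)], of real_of_int] by simp
  moreover have "real (n - l) = real n - real l"
    using steps_away_le_half[OF assms(1)] by simp
  ultimately show ?thesis
    using chi_bound_variance[OF assms(2-4)] by (simp add: power2_eq_square algebra_simps)
qed

lemma chi_eq_1_and_0_steps_if_10_le_n_le_12: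
  fixes c :: real and n l :: nat
  assumes "c \<in> \<int>" "1 \<le> c" "2 * l \<le> n" "10 \<le> n" "n \<le> 12"
    and "(8 * c + 1) * real n < (real n - 2 * real l)\<^sup>2"
  shows "c = 1 \<and> l = 0"
proof -
  have "(real n - 2 * real l)\<^sup>2 \<le> (real n)\<^sup>2"
    using assms(3) by (intro power_mono) auto
  then have "(8 * c + 1) * real n < real n * real n"
    using assms(6) by (simp add: power2_eq_square)
  then have "8 * c + 1 < real n"
    using assms(4) by simp
  then have "c < 2"
    using assms(5) by simp
  then have c: "c = 1"
    using assms(1,2) by (elim Ints_cases) simp
  have "l = 0"
  proof (rule ccontr)
    assume "l \<noteq> 0"
    then have "(real n - 2 * real l)\<^sup>2 \<le> (real n - 2)\<^sup>2"
      using assms(3) by (intro power_mono) auto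
    with assms(6) c have "9 * real n < (real n - 2)\<^sup>2"
      by simp
    moreover have "real n * real n \<le> 12 * real n"
      using assms(5) by (intro mult_right_mono) auto
    ultimately show False
      using assms(4) by (simp add: power2_eq_square algebra_simps)
  qed
  with c show ?thesis ..
qed

theorem proposition4p6:
  fixes n :: nat and d :: int and m :: "nat \<Rightarrow> int" and t :: real and l :: nat
  assumes "balanced n m"
    and "effective n d m"
    and "chi n d m \<ge> 1"
    and "ample_A n t"
    and "2 * intersect n (A_cls t) (int_class d m) \<le> intersect n (A_cls t) K_cls"
    and "steps_away n m l"
  shows "real l < (real n - sqrt ((8 * chi n d m + 1) * real n)) / 2
         \<and> (10 \<le> n \<and> n \<le> 12 \<longrightarrow>
              chi n d m = 1 \<and> l = 0 \<and> (\<forall>i<n. \<forall>j<n. m i = m j))"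
proof -
  have d: "0 \<le> d"
    using assms(2) by (simp add: effective_def)
  have bound: "(8 * chi n d m + 1) * real n < (real n - 2 * real l)\<^sup>2"
    using steps_away_chi_bound[OF assms(6,4) d assms(5)] .
  have half: "2 * l \<le> n"
    using steps_away_le_half[OF assms(6)] .
  have "sqrt ((8 * chi n d m + 1) * real n) < sqrt ((real n - 2 * real l)\<^sup>2)"
    using bound by (rule real_sqrt_less_mono)
  then have "real l < (real n - sqrt ((8 * chi n d m + 1) * real n)) / 2"
    using half by simp
  moreover have "chi n d m = 1 \<and> l = 0 \<and> (\<forall>i<n. \<forall>j<n. m i = m j)"
    if "10 \<le> n" "n \<le> 12"
    using chi_eq_1_and_0_steps_if_10_le_n_le_12[OF chi_Ints assms(3) half that bound]
      steps_away_0_imp_equal assms(6) by blast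
  ultimately show ?thesis
    by blast
qed

end
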